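(* Let $n$ be a positive integer and let $L_3(n)$ denote the number of $3\times n$ Latin rectangles. For $s:\{0,1\}^3\to\mathbb{Z}_{\ge 0}$, written $s_\varepsilon$ for $\varepsilon=\varepsilon_1\varepsilon_2\varepsilon_3\in\{0,1\}^3$, and nonempty $J\subseteq\{1,2,3\}$, let $f_J=\sum_{\varepsilon:\ \varepsilon_j=0\text{ for all } j\in J}s_\varepsilon$ (so e.g. $f_{\{1\}}=s_{000}+s_{010}+s_{001}+s_{011}$, $f_{\{1,2\}}=s_{000}+s_{001}$, $f_{\{1,2,3\}}=s_{000}$). Then \[ L_3(n)=\sum_{s}(-1)^{\sum_\varepsilon|\varepsilon|\,s_\varepsilon}\frac{n!}{\prod_\varepsilon s_\varepsilon!}\big[f_{\{1\}}f_{\{2\}}f_{\{3\}}-f_{\{1,2\}}f_{\{3\}}-f_{\{2,3\}}f_{\{1\}}-f_{\{1,3\}}f_{\{2\}}+2f_{\{1,2,3\}}\big]^n, \] where the sum runs over all $s:\{0,1\}^3\to\mathbb{Z}_{\ge0}$ with $\sum_\varepsilon s_\varepsilon=n$ and $|\varepsilon|=\varepsilon_1+\varepsilon_2+\varepsilon_3$.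
   Context: A $k\times n$ Latin rectangle is a $k\times n$ matrix with entries in $\{1,\dots,n\}$ such that no row and no column contains a repeated entry (so each row is a permutation of $\{1,\dots,n\}$). The convention $0^0=1$ is used. *)

theory Defs
  imports "HOL-Analysis.Analysis"
begin

definition latin_rectangle :: "nat \<Rightarrow> nat \<Rightarrow> (nat \<Rightarrow> nat \<Rightarrow> nat) \<Rightarrow> bool" where
  "latin_rectangle k n M \<longleftrightarrow>
     (\<forall>i j. (i < k \<and> j < n) \<longrightarrow> M i j \<in> {1..n}) \<and>
     (\<forall>i j. \<not> (i < k \<and> j < n) \<longrightarrow> M i j = 0) \<and>
     (\<forall>i<k. inj_on (M i) {..<n}) \<and>
     (\<forall>j<n. inj_on (\<lambda>i. M i j) {..<k})"

definition L :: "nat \<Rightarrow> nat \<Rightarrow> nat" where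
  "L k n = card {M. latin_rectangle k n M}"

text \<open>Elements of {0,1}^3 are triples of booleans (True = 1).\<close>
type_synonym eps = "bool \<times> bool \<times> bool"

definition epscomp :: "eps \<Rightarrow> nat \<Rightarrow> bool" where
  "epscomp e j = (if j = 1 then fst e else if j = 2 then fst (snd e) else snd (snd e))"

definition weight :: "eps \<Rightarrow> nat" where
  "weight e = card {j \<in> {1,2,3}. epscomp e j}"

definition fJ :: "(eps \<Rightarrow> nat) \<Rightarrow> nat set \<Rightarrow> int" where
  "fJ s J = (\<Sum>e \<in> {e. \<forall>j\<in>J. \<not> epscomp e j}. int (s e))"

end

theory Submission
  imports Defs "HOL-Combinatorics.Multiset_Permutations"
begin

(* Encode a 3 x n Latin rectangle by its n columns: triples of distinct values in {0..n-1}
   such that every value occurs in every row. Sieve over the pairs (value v, row j) where v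
   is missing: a choice \<epsilon> of a set \<epsilon> v of excluded rows for each value has sign
   (-1)^(\<Sum>v. |\<epsilon> v|), and the arrays of distinct-entry columns avoiding \<epsilon> consist of n
   independent columns, so there are c(\<epsilon>)^n of them, c(\<epsilon>) being the number of distinct
   triples avoiding \<epsilon>. Counting all triples and correcting for the coincidences a = b,
   b = c, a = c shows that c(\<epsilon>) is the bracket evaluated at the type s of \<epsilon>,
   s e = #{v. \<epsilon> v = e}; finally, n!/\<Prod>e. s e! choices of \<epsilon> have type s. *)

lemma prod_of_bool:
  assumes "finite A"
  shows "(\<Prod>x\<in>A. of_bool (P x) :: 'b::comm_semiring_1) = of_bool (\<forall>x\<in>A. P x)"
  using assms by (induction A rule: finite_induct) auto

lemma sum_delta_of_bool:
  fixes f :: "'a \<Rightarrow> 'b::semiring_1"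
  assumes "finite I" "a \<in> I"
  shows "(\<Sum>b\<in>I. of_bool (a = b) * f b) = f a"
proof -
  have "I \<inter> {b. a = b} = {a}"
    using assms(2) by auto
  then show ?thesis
    using assms(1) by simp
qed

lemma sum_distinct_triples:
  fixes x y z :: "'a \<Rightarrow> 'b::comm_ring_1"
  assumes I: "finite I"
  shows "(\<Sum>(a, b, c) \<in> I \<times> I \<times> I. of_bool (distinct [a, b, c]) * (x a * y b * z c)) =
      sum x I * sum y I * sum z I - (\<Sum>i\<in>I. x i * y i) * sum z I
      - (\<Sum>i\<in>I. y i * z i) * sum x I - (\<Sum>i\<in>I. x i * z i) * sum y I
      + 2 * (\<Sum>i\<in>I. x i * y i * z i)"
proof -
  define F where "F a b c = x a * y b * z c" for a b c
  have indicator: "(of_bool (distinct [a, b, c]) :: 'b) =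
      1 - of_bool (a = b) - of_bool (b = c) - of_bool (a = c) + 2 * (of_bool (a = b) * of_bool (b = c))"
    for a b c :: 'a
    by auto
  have "(\<Sum>(a, b, c) \<in> I \<times> I \<times> I. of_bool (distinct [a, b, c]) * F a b c) =
      (\<Sum>a\<in>I. \<Sum>b\<in>I. \<Sum>c\<in>I. F a b c) - (\<Sum>a\<in>I. \<Sum>b\<in>I. \<Sum>c\<in>I. of_bool (a = b) * F a b c)
      - (\<Sum>a\<in>I. \<Sum>b\<in>I. \<Sum>c\<in>I. of_bool (b = c) * F a b c)
      - (\<Sum>a\<in>I. \<Sum>b\<in>I. \<Sum>c\<in>I. of_bool (a = c) * F a b c)
      + 2 * (\<Sum>a\<in>I. \<Sum>b\<in>I. \<Sum>c\<in>I. of_bool (a = b) * (of_bool (b = c) * F a b c))"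
    by (simp only: sum.cartesian_product[symmetric] split_conv indicator left_diff_distrib
        distrib_right mult_1_left mult.assoc sum.distrib sum_subtractf sum_distrib_left)
  also have "\<dots> = (\<Sum>a\<in>I. \<Sum>b\<in>I. \<Sum>c\<in>I. F a b c) - (\<Sum>a\<in>I. \<Sum>c\<in>I. F a a c)
      - (\<Sum>a\<in>I. \<Sum>b\<in>I. F a b b) - (\<Sum>a\<in>I. \<Sum>b\<in>I. F a b a) + 2 * (\<Sum>a\<in>I. F a a a)"
    using I by (simp add: sum_delta_of_bool flip: sum_distrib_left)
  also have "\<dots> = sum x I * sum y I * sum z I - (\<Sum>i\<in>I. x i * y i) * sum z I
      - (\<Sum>i\<in>I. y i * z i) * sum x I - (\<Sum>i\<in>I. x i * z i) * sum y I
      + 2 * (\<Sum>i\<in>I. x i * y i * z i)"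
  proof -
    have "(\<Sum>a\<in>I. \<Sum>b\<in>I. \<Sum>c\<in>I. F a b c) = sum x I * (sum y I * sum z I)"
      by (simp add: F_def mult.assoc flip: sum_distrib_left sum_distrib_right)
    moreover have "(\<Sum>a\<in>I. \<Sum>c\<in>I. F a a c) = (\<Sum>i\<in>I. x i * y i) * sum z I"
      by (simp add: F_def sum_product)
    moreover have "(\<Sum>a\<in>I. \<Sum>b\<in>I. F a b b) = sum x I * (\<Sum>i\<in>I. y i * z i)"
      by (simp add: F_def sum_product mult.assoc)
    moreover have "(\<Sum>a\<in>I. \<Sum>b\<in>I. F a b a) = (\<Sum>i\<in>I. x i * z i) * sum y I"
      by (simp add: F_def sum_distrib_left sum_distrib_right mult_ac)
    ultimately show ?thesis
      by (simp add: F_def mult_ac)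
  qed
  finally show ?thesis
    by (simp only: F_def)
qed

lemma inj_on_lessThan_3: "inj_on f {..<3::nat} \<longleftrightarrow> distinct [f 0, f 1, f 2]"
  by (auto simp: lessThan_nat_numeral inj_on_def)

lemma inj_on_lessThan_iff_surj:
  fixes f :: "nat \<Rightarrow> nat"
  assumes "f ` {..<n} \<subseteq> {..<n}"
  shows "inj_on f {..<n} \<longleftrightarrow> {..<n} \<subseteq> f ` {..<n}"
proof
  assume "inj_on f {..<n}"
  with assms have "f ` {..<n} = {..<n}"
    by (intro endo_inj_surj) auto
  then show "{..<n} \<subseteq> f ` {..<n}"
    by simp
next
  assume "{..<n} \<subseteq> f ` {..<n}"
  then show "inj_on f {..<n}"
    by (simp add: finite_surj_inj)
qed

section \<open>Words with prescribed letter multiplicities\<close>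

definition letter_count :: "nat \<Rightarrow> (nat \<Rightarrow> 'a) \<Rightarrow> 'a \<Rightarrow> nat" where
  "letter_count n w a = card {i. i < n \<and> w i = a}"

lemma sum_letter_count:
  fixes g :: "'a \<Rightarrow> 'b::comm_semiring_1"
  assumes "finite A"
  shows "(\<Sum>a\<in>A. of_nat (letter_count n w a) * g a) = (\<Sum>i | i < n \<and> w i \<in> A. g (w i))"
proof -
  have fiber: "(\<Sum>i | i \<in> {i. i < n \<and> w i \<in> A} \<and> w i = a. g (w i)) = of_nat (letter_count n w a) * g a"
    if "a \<in> A" for a
  proof -
    have "{i. i \<in> {i. i < n \<and> w i \<in> A} \<and> w i = a} = {i. i < n \<and> w i = a}"
      using that by auto
    moreover have "(\<Sum>i | i < n \<and> w i = a. g (w i)) = (\<Sum>i | i < n \<and> w i = a. g a)"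
      by (rule sum.cong) auto
    ultimately show ?thesis
      by (simp add: letter_count_def)
  qed
  have "(\<Sum>i | i < n \<and> w i \<in> A. g (w i)) =
      (\<Sum>a\<in>A. \<Sum>i | i \<in> {i. i < n \<and> w i \<in> A} \<and> w i = a. g (w i))"
    using assms by (intro sum.group[symmetric]) auto
  also have "\<dots> = (\<Sum>a\<in>A. of_nat (letter_count n w a) * g a)"
    by (intro sum.cong refl) (rule fiber)
  finally show ?thesis ..
qed

lemma sum_letter_count_total: "(\<Sum>a\<in>UNIV. letter_count n w (a :: 'a::finite)) = n"
  using sum_letter_count[of "UNIV :: 'a set" n w "\<lambda>_. 1 :: nat"] by simp

lemma letter_count_map_upt: "letter_count n w a = count (mset (map w [0..<n])) a"
  unfolding letter_count_def count_mset count_list_eq_length_filter length_filter_conv_card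
  by (rule arg_cong[where f = card]) auto

lemma bij_betw_map_upt: "bij_betw (\<lambda>w. map w [0..<n]) ({..<n} \<rightarrow>\<^sub>E UNIV) {xs. length xs = n}"
proof (rule bij_betw_byWitness[where f' = "\<lambda>xs. \<lambda>i\<in>{..<n}. xs ! i"])
  show "\<forall>w\<in>{..<n} \<rightarrow>\<^sub>E UNIV. (\<lambda>i\<in>{..<n}. map w [0..<n] ! i) = w"
    by (auto simp: PiE_iff extensional_def fun_eq_iff)
  show "\<forall>xs\<in>{xs. length xs = n}. map (\<lambda>i\<in>{..<n}. xs ! i) [0..<n] = xs"
    by (simp add: list_eq_iff_nth_eq)
  show "(\<lambda>w. map w [0..<n]) ` ({..<n} \<rightarrow>\<^sub>E UNIV) \<subseteq> {xs. length xs = n}"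
    by (simp add: image_subset_iff)
  show "(\<lambda>xs. \<lambda>i\<in>{..<n}. xs ! i) ` {xs. length xs = n} \<subseteq> {..<n} \<rightarrow>\<^sub>E UNIV"
    by (simp add: image_subset_iff)
qed

lemma card_words_with_letter_counts:
  fixes s :: "'a::finite \<Rightarrow> nat"
  assumes "(\<Sum>a\<in>UNIV. s a) = n"
  shows "card {w \<in> {..<n} \<rightarrow>\<^sub>E UNIV. letter_count n w = s} = fact n div (\<Prod>a\<in>UNIV. fact (s a))"
proof -
  define M where "M = Abs_multiset s"
  have count_M: "count M = s"
    unfolding M_def by (rule count_Abs_multiset) simp
  have "size M = (\<Sum>a\<in>set_mset M. count M a)"
    by (rule size_multiset_overloaded_eq)
  also have "\<dots> = (\<Sum>a\<in>UNIV. count M a)"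
    by (rule sum.mono_neutral_left) (auto simp: not_in_iff)
  finally have size_M: "size M = n"
    using assms by (simp add: count_M)
  have "(\<Prod>a\<in>set_mset M. fact (count M a)) = (\<Prod>a\<in>UNIV. fact (count M a) :: nat)"
    by (rule prod.mono_neutral_left) (auto simp: not_in_iff)
  then have prod_M: "(\<Prod>a\<in>set_mset M. fact (count M a)) = (\<Prod>a\<in>UNIV. fact (s a) :: nat)"
    by (simp add: count_M)
  have "bij_betw (\<lambda>w. map w [0..<n]) {w \<in> {..<n} \<rightarrow>\<^sub>E UNIV. letter_count n w = s}
      {xs \<in> {xs. length xs = n}. mset xs = M}"
    using bij_betw_map_upt
    by (rule bij_betw_Collect) (simp add: letter_count_map_upt fun_eq_iff multiset_eq_iff count_M)
  moreover have "{xs \<in> {xs. length xs = n}. mset xs = M} = permutations_of_multiset M"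
    using size_M by (auto simp: permutations_of_multiset_def dest: arg_cong[where f = size])
  ultimately have "card {w \<in> {..<n} \<rightarrow>\<^sub>E UNIV. letter_count n w = s} = card (permutations_of_multiset M)"
    by (simp add: bij_betw_same_card)
  also have "\<dots> = fact n div (\<Prod>a\<in>UNIV. fact (s a))"
    by (simp add: card_permutations_of_multiset size_M prod_M)
  finally show ?thesis .
qed

lemma finite_weak_compositions: "finite {s :: 'a::finite \<Rightarrow> nat. (\<Sum>a\<in>UNIV. s a) = n}"
proof (rule finite_subset)
  show "{s :: 'a \<Rightarrow> nat. (\<Sum>a\<in>UNIV. s a) = n} \<subseteq> UNIV \<rightarrow>\<^sub>E {..n}"
  proof
    fix s :: "'a \<Rightarrow> nat"
    assume "s \<in> {s. (\<Sum>a\<in>UNIV. s a) = n}"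
    then have "s a \<le> n" for a
      using member_le_sum[of a UNIV s] by simp
    then show "s \<in> UNIV \<rightarrow>\<^sub>E {..n}"
      by (simp add: PiE_UNIV_domain)
  qed
qed (simp add: finite_PiE)

lemma sum_words_by_letter_counts:
  fixes h :: "('a::finite \<Rightarrow> nat) \<Rightarrow> 'b::comm_semiring_1"
  shows "(\<Sum>w\<in>{..<n} \<rightarrow>\<^sub>E UNIV. h (letter_count n w)) =
    (\<Sum>s | (\<Sum>a\<in>UNIV. s a) = n. of_nat (fact n div (\<Prod>a\<in>UNIV. fact (s a))) * h s)"
proof -
  have "(\<Sum>w\<in>{..<n} \<rightarrow>\<^sub>E UNIV. h (letter_count n w)) =
      (\<Sum>s | (\<Sum>a\<in>UNIV. s a) = n.
         \<Sum>w | w \<in> {..<n} \<rightarrow>\<^sub>E UNIV \<and> letter_count n w = s. h (letter_count n w))"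
    by (rule sum.group[symmetric])
      (simp_all add: finite_PiE finite_weak_compositions image_subset_iff sum_letter_count_total)
  also have "\<dots> = (\<Sum>s | (\<Sum>a\<in>UNIV. s a) = n. of_nat (fact n div (\<Prod>a\<in>UNIV. fact (s a))) * h s)"
  proof (rule sum.cong[OF refl])
    fix s :: "'a \<Rightarrow> nat"
    assume "s \<in> {s. (\<Sum>a\<in>UNIV. s a) = n}"
    then have "card {w \<in> {..<n} \<rightarrow>\<^sub>E UNIV. letter_count n w = s} = fact n div (\<Prod>a\<in>UNIV. fact (s a))"
      by (simp add: card_words_with_letter_counts)
    moreover have "(\<Sum>w | w \<in> {..<n} \<rightarrow>\<^sub>E UNIV \<and> letter_count n w = s. h (letter_count n w)) =
        (\<Sum>w | w \<in> {..<n} \<rightarrow>\<^sub>E UNIV \<and> letter_count n w = s. h s)"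
      by (rule sum.cong) auto
    ultimately show "(\<Sum>w | w \<in> {..<n} \<rightarrow>\<^sub>E UNIV \<and> letter_count n w = s. h (letter_count n w)) =
        of_nat (fact n div (\<Prod>a\<in>UNIV. fact (s a))) * h s"
      by simp
  qed
  finally show ?thesis .
qed

section \<open>Latin rectangles with three rows as column arrays\<close>

(* A column is a triple of 0-based entries whose rows are numbered 1, 2, 3 as in epscomp;
   latin_rectangle instead numbers rows from 0 and entries from 1. *)
definition entry :: "nat \<times> nat \<times> nat \<Rightarrow> nat \<Rightarrow> nat" where
  "entry t j = (if j = 1 then fst t else if j = 2 then fst (snd t) else snd (snd t))"

abbreviation column_arrays :: "nat \<Rightarrow> (nat \<Rightarrow> nat \<times> nat \<times> nat) set" where
  "column_arrays n \<equiv> {..<n} \<rightarrow>\<^sub>E {..<n} \<times> {..<n} \<times> {..<n}"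

definition latin_columns :: "nat \<Rightarrow> (nat \<Rightarrow> nat \<times> nat \<times> nat) \<Rightarrow> bool" where
  "latin_columns n C \<longleftrightarrow>
     (\<forall>k<n. distinct [entry (C k) 1, entry (C k) 2, entry (C k) 3]) \<and>
     (\<forall>j\<in>{1,2,3}. {..<n} \<subseteq> (\<lambda>k. entry (C k) j) ` {..<n})"

definition rect_of_columns :: "nat \<Rightarrow> (nat \<Rightarrow> nat \<times> nat \<times> nat) \<Rightarrow> nat \<Rightarrow> nat \<Rightarrow> nat" where
  "rect_of_columns n C i k = (if i < 3 \<and> k < n then entry (C k) (i + 1) + 1 else 0)"

definition columns_of_rect :: "nat \<Rightarrow> (nat \<Rightarrow> nat \<Rightarrow> nat) \<Rightarrow> nat \<Rightarrow> nat \<times> nat \<times> nat" where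
  "columns_of_rect n M = (\<lambda>k\<in>{..<n}. (M 0 k - 1, M 1 k - 1, M 2 k - 1))"

lemma rect_of_columns_eq: "i < 3 \<Longrightarrow> k < n \<Longrightarrow> rect_of_columns n C i k = entry (C k) (i + 1) + 1"
  by (simp add: rect_of_columns_def)

lemma entry_less_column_arrays:
  assumes "C \<in> column_arrays n" "k < n"
  shows "entry (C k) j < n"
proof -
  have "C k \<in> {..<n} \<times> {..<n} \<times> {..<n}"
    using PiE_mem[OF assms(1)] assms(2) by simp
  then show ?thesis
    by (auto simp: entry_def)
qed

lemma columns_of_rect_of_columns:
  assumes "C \<in> column_arrays n"
  shows "columns_of_rect n (rect_of_columns n C) = C"
proof
  fix k
  show "columns_of_rect n (rect_of_columns n C) k = C k"
  proof (cases "k < n")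
    case True
    obtain a b c where "C k = (a, b, c)"
      by (cases "C k")
    with True show ?thesis
      by (simp add: columns_of_rect_def rect_of_columns_eq entry_def)
  next
    case False
    then show ?thesis
      using PiE_arb[OF assms] by (simp add: columns_of_rect_def)
  qed
qed

lemma columns_of_rect_in_column_arrays:
  assumes "latin_rectangle 3 n M"
  shows "columns_of_rect n M \<in> column_arrays n"
proof -
  have "M i k - 1 < n" if "i < 3" "k < n" for i k
  proof -
    have "M i k \<in> {1..n}"
      using assms that by (simp add: latin_rectangle_def)
    then show ?thesis
      by auto
  qed
  then show ?thesis
    by (simp add: columns_of_rect_def)
qed

lemma rect_of_columns_of_rect:
  assumes "latin_rectangle 3 n M"
  shows "rect_of_columns n (columns_of_rect n M) = M"
proof (intro ext)
  fix i k
  show "rect_of_columns n (columns_of_rect n M) i k = M i k"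
  proof (cases "i < 3 \<and> k < n")
    case True
    then have "M i k \<in> {1..n}" and "i = 0 \<or> i = 1 \<or> i = 2"
      using assms by (auto simp: latin_rectangle_def)
    with True show ?thesis
      by (auto simp: rect_of_columns_def columns_of_rect_def entry_def)
  next
    case False
    then show ?thesis
      using assms by (simp add: rect_of_columns_def latin_rectangle_def)
  qed
qed

lemma latin_rectangle_rect_of_columns_iff:
  assumes C: "C \<in> column_arrays n"
  shows "latin_rectangle 3 n (rect_of_columns n C) \<longleftrightarrow> latin_columns n C"
proof -
  note entry_less = entry_less_column_arrays[OF C]
  have range: "rect_of_columns n C i k \<in> {1..n}" if "i < 3" "k < n" for i k
    using entry_less[OF that(2), of "i + 1"] that by (simp add: rect_of_columns_eq)
  have outside: "rect_of_columns n C i k = 0" if "\<not> (i < 3 \<and> k < n)" for i k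
    using that by (simp add: rect_of_columns_def)
  have row: "inj_on (rect_of_columns n C i) {..<n} \<longleftrightarrow>
      {..<n} \<subseteq> (\<lambda>k. entry (C k) (i + 1)) ` {..<n}" if "i < 3" for i
  proof -
    have "inj_on (rect_of_columns n C i) {..<n} \<longleftrightarrow> inj_on (\<lambda>k. entry (C k) (i + 1)) {..<n}"
      using that by (simp add: inj_on_def rect_of_columns_def)
    also have "\<dots> \<longleftrightarrow> {..<n} \<subseteq> (\<lambda>k. entry (C k) (i + 1)) ` {..<n}"
      by (rule inj_on_lessThan_iff_surj) (auto intro: entry_less)
    finally show ?thesis .
  qed
  have rows: "(\<forall>i<3. {..<n} \<subseteq> (\<lambda>k. entry (C k) (i + 1)) ` {..<n}) \<longleftrightarrow>
      (\<forall>j\<in>{1,2,3}. {..<n} \<subseteq> (\<lambda>k. entry (C k) j) ` {..<n})"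
    by (auto simp: less_Suc_eq numeral_2_eq_2 numeral_3_eq_3)
  have column: "inj_on (\<lambda>i. rect_of_columns n C i k) {..<3} \<longleftrightarrow>
      distinct [entry (C k) 1, entry (C k) 2, entry (C k) 3]" if "k < n" for k
    using that unfolding inj_on_lessThan_3
    by (simp add: rect_of_columns_eq numeral_2_eq_2 numeral_3_eq_3)
  have "latin_rectangle 3 n (rect_of_columns n C) \<longleftrightarrow>
      (\<forall>i<3. inj_on (rect_of_columns n C i) {..<n}) \<and>
      (\<forall>k<n. inj_on (\<lambda>i. rect_of_columns n C i k) {..<3})"
    unfolding latin_rectangle_def using range outside by blast
  also have "\<dots> \<longleftrightarrow> latin_columns n C"
    unfolding latin_columns_def using row rows column by blast
  finally show ?thesis .
qed

lemma card_latin_rectangles_3: "L 3 n = card {C \<in> column_arrays n. latin_columns n C}"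
proof -
  have "{M. latin_rectangle 3 n M} = rect_of_columns n ` {C \<in> column_arrays n. latin_columns n C}"
  proof (intro equalityI subsetI)
    fix M
    assume "M \<in> {M. latin_rectangle 3 n M}"
    then have M: "latin_rectangle 3 n M"
      by simp
    have C: "columns_of_rect n M \<in> column_arrays n"
      using M by (rule columns_of_rect_in_column_arrays)
    have eq: "rect_of_columns n (columns_of_rect n M) = M"
      using M by (rule rect_of_columns_of_rect)
    have "latin_columns n (columns_of_rect n M)"
      using M eq latin_rectangle_rect_of_columns_iff[OF C] by simp
    with C eq show "M \<in> rect_of_columns n ` {C \<in> column_arrays n. latin_columns n C}"
      by (intro rev_image_eqI[where x = "columns_of_rect n M"]) simp_all
  next
    fix M
    assume "M \<in> rect_of_columns n ` {C \<in> column_arrays n. latin_columns n C}"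
    then obtain C where "C \<in> column_arrays n" "latin_columns n C" "M = rect_of_columns n C"
      by blast
    then show "M \<in> {M. latin_rectangle 3 n M}"
      by (simp add: latin_rectangle_rect_of_columns_iff)
  qed
  moreover have "inj_on (rect_of_columns n) (column_arrays n)"
    by (rule inj_on_inverseI[where g = "columns_of_rect n"]) (rule columns_of_rect_of_columns)
  then have "inj_on (rect_of_columns n) {C \<in> column_arrays n. latin_columns n C}"
    by (rule inj_on_subset) blast
  ultimately show ?thesis
    unfolding L_def by (simp add: card_image)
qed

section \<open>Inclusion-exclusion over forbidden rows\<close>

lemma weight_eq_of_bool: "weight (a, b, c) = of_bool a + of_bool b + of_bool c"
proof -
  have "{j \<in> {1,2,3}. epscomp (a, b, c) j} =
      (if a then {1} else {}) \<union> (if b then {2} else {}) \<union> (if c then {3 :: nat} else {})"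
    by (auto simp: epscomp_def split: if_splits)
  then show ?thesis
    unfolding weight_def by (cases a; cases b; cases c) (simp_all add: card_insert_if)
qed

(* A row j with P j forces e_j = 0; any other row contributes the factor 1 + (-1) = 0. *)
lemma sum_sign_weight_avoiding_rows:
  fixes P :: "nat \<Rightarrow> bool"
  shows "(\<Sum>e\<in>UNIV. (-1) ^ weight e * of_bool (\<forall>j\<in>{1,2,3}. P j \<longrightarrow> \<not> epscomp e j) :: 'a::comm_ring_1) =
    of_bool (\<forall>j\<in>{1,2,3}. P j)"
proof -
  have "(\<Sum>e\<in>UNIV. f e) = (\<Sum>a\<in>UNIV. \<Sum>b\<in>UNIV. \<Sum>c\<in>UNIV. f (a, b, c))" for f :: "eps \<Rightarrow> 'a"
    by (simp add: sum.cartesian_product flip: UNIV_Times_UNIV del: UNIV_Times_UNIV)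
  then show ?thesis
    by (cases "P 1"; cases "P 2"; cases "P 3") (simp_all add: weight_eq_of_bool epscomp_def UNIV_bool)
qed

(* \<epsilon> v is the set of rows from which the value v is excluded. *)
definition avoids :: "(nat \<Rightarrow> eps) \<Rightarrow> nat \<times> nat \<times> nat \<Rightarrow> bool" where
  "avoids \<epsilon> t \<longleftrightarrow> (\<forall>j\<in>{1,2,3}. \<not> epscomp (\<epsilon> (entry t j)) j)"

lemma sum_signed_avoiding_columns:
  assumes C: "C \<in> column_arrays n"
  shows "(\<Sum>\<epsilon>\<in>{..<n} \<rightarrow>\<^sub>E UNIV. (-1) ^ (\<Sum>v<n. weight (\<epsilon> v)) * of_bool (\<forall>k<n. avoids \<epsilon> (C k)) :: int) =
    of_bool (\<forall>j\<in>{1,2,3}. {..<n} \<subseteq> (\<lambda>k. entry (C k) j) ` {..<n})"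
proof -
  define row where "row j = (\<lambda>k. entry (C k) j) ` {..<n}" for j
  have avoids_iff: "(\<forall>k<n. avoids \<epsilon> (C k)) \<longleftrightarrow>
      (\<forall>v\<in>{..<n}. \<forall>j\<in>{1,2,3}. v \<in> row j \<longrightarrow> \<not> epscomp (\<epsilon> v) j)" for \<epsilon>
    using entry_less_column_arrays[OF C] by (auto simp: avoids_def row_def)
  have "(\<Sum>\<epsilon>\<in>{..<n} \<rightarrow>\<^sub>E UNIV. (-1) ^ (\<Sum>v<n. weight (\<epsilon> v)) * of_bool (\<forall>k<n. avoids \<epsilon> (C k)) :: int) =
      (\<Sum>\<epsilon>\<in>{..<n} \<rightarrow>\<^sub>E UNIV. \<Prod>v<n.
         (-1) ^ weight (\<epsilon> v) * of_bool (\<forall>j\<in>{1,2,3}. v \<in> row j \<longrightarrow> \<not> epscomp (\<epsilon> v) j))"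
    unfolding avoids_iff power_sum prod.distrib prod_of_bool[OF finite_lessThan] ..
  also have "\<dots> = (\<Prod>v<n. \<Sum>e\<in>UNIV.
      (-1) ^ weight e * of_bool (\<forall>j\<in>{1,2,3}. v \<in> row j \<longrightarrow> \<not> epscomp e j))"
    by (rule prod_sum_PiE[symmetric]) simp_all
  also have "\<dots> = (\<Prod>v<n. of_bool (\<forall>j\<in>{1,2,3}. v \<in> row j))"
    by (simp only: sum_sign_weight_avoiding_rows)
  also have "\<dots> = of_bool (\<forall>v\<in>{..<n}. \<forall>j\<in>{1,2,3}. v \<in> row j)"
    by (rule prod_of_bool) simp
  also have "(\<forall>v\<in>{..<n}. \<forall>j\<in>{1,2,3}. v \<in> row j) \<longleftrightarrow> (\<forall>j\<in>{1,2,3}. {..<n} \<subseteq> row j)"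
    by blast
  finally show ?thesis
    by (simp only: row_def)
qed

lemma weight_letter_count: "(\<Sum>e\<in>UNIV. weight e * letter_count n \<epsilon> e) = (\<Sum>v<n. weight (\<epsilon> v))"
  using sum_letter_count[of UNIV n \<epsilon> weight] by (simp add: mult.commute lessThan_def)

lemma fJ_letter_count:
  "fJ (letter_count n \<epsilon>) J = (\<Sum>v<n. of_bool (\<forall>j\<in>J. \<not> epscomp (\<epsilon> v) j))"
  using sum_letter_count[of "{e. \<forall>j\<in>J. \<not> epscomp e j}" n \<epsilon> "\<lambda>_. 1 :: int"]
  by (simp add: fJ_def lessThan_def Collect_conj_eq)

lemma of_bool_latin_columns_sieve:
  assumes C: "C \<in> column_arrays n"
  shows "of_bool (latin_columns n C) = (\<Sum>\<epsilon>\<in>{..<n} \<rightarrow>\<^sub>E UNIV. (-1) ^ (\<Sum>v<n. weight (\<epsilon> v)) *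
    (\<Prod>k<n. of_bool (distinct [entry (C k) 1, entry (C k) 2, entry (C k) 3] \<and> avoids \<epsilon> (C k))) :: int)"
proof -
  define D where "D \<longleftrightarrow> (\<forall>k<n. distinct [entry (C k) 1, entry (C k) 2, entry (C k) 3])"
  have prod_eq: "(\<Prod>k<n. of_bool (distinct [entry (C k) 1, entry (C k) 2, entry (C k) 3] \<and> avoids \<epsilon> (C k))) =
      of_bool D * (of_bool (\<forall>k<n. avoids \<epsilon> (C k)) :: int)" for \<epsilon>
    unfolding D_def by (auto simp: prod_of_bool)
  have "of_bool (latin_columns n C) = (of_bool D * (\<Sum>\<epsilon>\<in>{..<n} \<rightarrow>\<^sub>E UNIV.
      (-1) ^ (\<Sum>v<n. weight (\<epsilon> v)) * of_bool (\<forall>k<n. avoids \<epsilon> (C k))) :: int)"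
    unfolding latin_columns_def D_def sum_signed_avoiding_columns[OF C] by simp
  then show ?thesis
    unfolding prod_eq by (simp add: sum_distrib_left mult_ac)
qed

definition column_poly :: "(eps \<Rightarrow> nat) \<Rightarrow> int" where
  "column_poly s = fJ s {1} * fJ s {2} * fJ s {3} - fJ s {1,2} * fJ s {3}
     - fJ s {2,3} * fJ s {1} - fJ s {1,3} * fJ s {2} + 2 * fJ s {1,2,3}"

lemma sum_admissible_columns:
  "(\<Sum>t\<in>{..<n} \<times> {..<n} \<times> {..<n}. of_bool (distinct [entry t 1, entry t 2, entry t 3] \<and> avoids \<epsilon> t)) =
    column_poly (letter_count n \<epsilon>)"
proof -
  define x where "x j v = (of_bool (\<not> epscomp (\<epsilon> v) j) :: int)" for j v
  have "(\<Sum>t\<in>{..<n} \<times> {..<n} \<times> {..<n}. of_bool (distinct [entry t 1, entry t 2, entry t 3] \<and> avoids \<epsilon> t)) =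
      (\<Sum>(a, b, c)\<in>{..<n} \<times> {..<n} \<times> {..<n}. of_bool (distinct [a, b, c]) * (x 1 a * x 2 b * x 3 c))"
    by (intro sum.cong refl) (auto simp: avoids_def entry_def x_def)
  also have "\<dots> = sum (x 1) {..<n} * sum (x 2) {..<n} * sum (x 3) {..<n}
      - (\<Sum>v<n. x 1 v * x 2 v) * sum (x 3) {..<n} - (\<Sum>v<n. x 2 v * x 3 v) * sum (x 1) {..<n}
      - (\<Sum>v<n. x 1 v * x 3 v) * sum (x 2) {..<n} + 2 * (\<Sum>v<n. x 1 v * x 2 v * x 3 v)"
    by (rule sum_distinct_triples) simp
  also have "\<dots> = column_poly (letter_count n \<epsilon>)"
    by (simp add: column_poly_def fJ_letter_count x_def of_bool_conj mult.assoc
        del: sum_of_bool_eq sum_mult_of_bool_eq sum_of_bool_mult_eq)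
  finally show ?thesis .
qed

lemma card_latin_columns_inclusion_exclusion:
  "int (card {C \<in> column_arrays n. latin_columns n C}) =
    (\<Sum>\<epsilon>\<in>{..<n} \<rightarrow>\<^sub>E UNIV. (-1) ^ (\<Sum>v<n. weight (\<epsilon> v)) * column_poly (letter_count n \<epsilon>) ^ n)"
proof -
  let ?sign = "\<lambda>\<epsilon> :: nat \<Rightarrow> eps. (-1 :: int) ^ (\<Sum>v<n. weight (\<epsilon> v))"
  let ?admissible = "\<lambda>\<epsilon> t. distinct [entry t 1, entry t 2, entry t 3] \<and> avoids \<epsilon> t"
  have "int (card {C \<in> column_arrays n. latin_columns n C}) =
      (\<Sum>C\<in>column_arrays n. of_bool (latin_columns n C))"
    by (simp add: finite_PiE Int_def)
  also have "\<dots> = (\<Sum>C\<in>column_arrays n. \<Sum>\<epsilon>\<in>{..<n} \<rightarrow>\<^sub>E UNIV.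
      ?sign \<epsilon> * (\<Prod>k<n. of_bool (?admissible \<epsilon> (C k))))"
    by (intro sum.cong refl) (rule of_bool_latin_columns_sieve)
  also have "\<dots> = (\<Sum>\<epsilon>\<in>{..<n} \<rightarrow>\<^sub>E UNIV.
      ?sign \<epsilon> * (\<Sum>C\<in>column_arrays n. \<Prod>k<n. of_bool (?admissible \<epsilon> (C k))))"
    by (subst sum.swap) (simp add: sum_distrib_left)
  also have "\<dots> = (\<Sum>\<epsilon>\<in>{..<n} \<rightarrow>\<^sub>E UNIV. ?sign \<epsilon> * column_poly (letter_count n \<epsilon>) ^ n)"
  proof (rule sum.cong[OF refl])
    fix \<epsilon> :: "nat \<Rightarrow> eps"
    have "(\<Sum>C\<in>column_arrays n. \<Prod>k<n. of_bool (?admissible \<epsilon> (C k)) :: int) =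
        (\<Prod>k<n. \<Sum>t\<in>{..<n} \<times> {..<n} \<times> {..<n}. of_bool (?admissible \<epsilon> t))"
      by (rule prod_sum_PiE[symmetric]) simp_all
    also have "\<dots> = column_poly (letter_count n \<epsilon>) ^ n"
      by (simp only: sum_admissible_columns prod_constant card_lessThan)
    finally show "?sign \<epsilon> * (\<Sum>C\<in>column_arrays n. \<Prod>k<n. of_bool (?admissible \<epsilon> (C k))) =
        ?sign \<epsilon> * column_poly (letter_count n \<epsilon>) ^ n"
      by simp
  qed
  finally show ?thesis .
qed

theorem mainTheorem3:
  fixes n :: nat
  assumes "n > 0"
  shows "int (L 3 n) =
    (\<Sum>s \<in> {s :: eps \<Rightarrow> nat. (\<Sum>e\<in>UNIV. s e) = n}.
       (-1) ^ (\<Sum>e\<in>UNIV. weight e * s e)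
       * int (fact n div (\<Prod>e\<in>UNIV. fact (s e)))
       * (fJ s {1} * fJ s {2} * fJ s {3} - fJ s {1,2} * fJ s {3}
          - fJ s {2,3} * fJ s {1} - fJ s {1,3} * fJ s {2} + 2 * fJ s {1,2,3}) ^ n)"
proof -
  let ?h = "\<lambda>s :: eps \<Rightarrow> nat. (-1 :: int) ^ (\<Sum>e\<in>UNIV. weight e * s e) * column_poly s ^ n"
  have "int (L 3 n) = (\<Sum>\<epsilon>\<in>{..<n} \<rightarrow>\<^sub>E UNIV. ?h (letter_count n \<epsilon>))"
    by (simp add: card_latin_rectangles_3 card_latin_columns_inclusion_exclusion weight_letter_count)
  also have "\<dots> = (\<Sum>s | (\<Sum>e\<in>UNIV. s e) = n. of_nat (fact n div (\<Prod>e\<in>UNIV. fact (s e))) * ?h s)"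
    by (rule sum_words_by_letter_counts)
  finally show ?thesis
    by (simp add: column_poly_def mult_ac)
qed

end
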